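(* For every integer $i\ge1$, $f(R_i)=i-1$.
   Context: Rooted binary trees $H_i$ are defined recursively: $H_1$ is a single vertex $r'_1$; for $i\ge2$, $H_i$ has root $r'_i$ with exactly two children: a leaf, and the root $r'_{i-1}$ of a copy of $H_{i-1}$. Rooted binary trees $R_i$ are defined recursively: $R_1$ is a single vertex $r_1$; for $i\ge2$, $R_i$ has root $r_i$ with exactly two children: the root $r_{i-1}$ of a copy of $R_{i-1}$ and the root $r'_{i-1}$ of a copy of $H_{i-1}$. For a rooted tree $T_r$, $h(T_r)$ is the number of vertices on a longest path in $T_r$ starting at $r$ ($h$ of a single vertex is $1$; the empty tree has $h=0$ and $f=0$), and $T_v$ is the subtree of descendants of $v$ rooted at $v$. The function $f$ is defined recursively: if $|V(T_r)|\le1$ then $f(T_r)=0$; otherwise let the children of $r$ be $v_1,\dots,v_k$ ordered so that $h(T_{v_1})\ge\dots\ge h(T_{v_k})$, appending an empty tree $T_{v_k}$ if needed so that $k$ is even; then $f(T_r)=\max\{\sum_{i=1}^k f(T_{v_i}),\ \sum_{i=1}^{k/2} h(T_{v_{2i}})\}$. *)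

theory Defs
  imports Main
begin

text \<open>Finite rooted trees: a node with a (finite) list of children. The order of
  the children list carries no meaning; the function fval below sorts children by height.\<close>
datatype rtree = Node "rtree list"

fun nverts :: "rtree \<Rightarrow> nat" where
  "nverts (Node cs) = Suc (sum_list (map nverts cs))"

fun ht :: "rtree \<Rightarrow> nat" where
  "ht (Node cs) = Suc (foldr max (map ht cs) 0)"

text \<open>Given heights sorted non-increasingly h_1 >= h_2 >= ..., the sum of h_2 + h_4 + ...
  (0-based odd positions). Padding by an empty tree (height 0) does not change it.\<close>
definition even_pos_sum :: "nat list \<Rightarrow> nat" where
  "even_pos_sum hs = sum_list (map (\<lambda>j. hs ! j) (filter odd [0..<length hs]))"

fun fval :: "rtree \<Rightarrow> nat" where
  "fval (Node cs) =
     (if nverts (Node cs) \<le> 1 then 0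
      else max (sum_list (map fval cs)) (even_pos_sum (rev (sort (map ht cs)))))"

fun Htree :: "nat \<Rightarrow> rtree" where
  "Htree 0 = Node []"
| "Htree (Suc 0) = Node []"
| "Htree (Suc (Suc n)) = Node [Node [], Htree (Suc n)]"

fun Rtree :: "nat \<Rightarrow> rtree" where
  "Rtree 0 = Node []"
| "Rtree (Suc 0) = Node []"
| "Rtree (Suc (Suc n)) = Node [Rtree (Suc n), Htree (Suc n)]"

end

theory Submission
  imports Defs
begin

text \<open>Induction on \<open>i\<close>: both children of the root of \<open>R(i+1)\<close> have height \<open>i\<close>, so
  the pairing term contributes \<open>i\<close>, while the summed term is
  \<open>f(R i) + f(H i) \<le> (i - 1) + 1\<close> because the caterpillar \<open>H i\<close> has \<open>f \<le> 1\<close>.\<close>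

lemma ht_Htree: "n \<ge> 1 \<Longrightarrow> ht (Htree n) = n"
  by (induction n rule: Htree.induct) auto

lemma ht_Rtree: "n \<ge> 1 \<Longrightarrow> ht (Rtree n) = n"
  by (induction n rule: Rtree.induct) (auto simp: ht_Htree)

lemma nverts_pos: "nverts t \<ge> 1"
  by (cases t) auto

lemma even_pos_sum_pair: "even_pos_sum [a, b] = b"
  by (simp add: even_pos_sum_def upt_rec)

lemma fval_leaf: "fval (Node []) = 0"
  by simp

lemma fval_two_children:
  "fval (Node [s, t]) = max (fval s + fval t) (min (ht s) (ht t))"
proof -
  have "\<not> nverts (Node [s, t]) \<le> 1"
    using nverts_pos[of s] nverts_pos[of t] by simp
  moreover have "rev (sort (map ht [s, t])) = [max (ht s) (ht t), min (ht s) (ht t)]"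
    by (simp add: max_def min_def)
  ultimately show ?thesis
    by (simp only: fval.simps if_False even_pos_sum_pair) simp
qed

lemma fval_Htree_le_1: "fval (Htree n) \<le> 1"
  by (induction n rule: Htree.induct) 
    (auto simp del: fval.simps simp: fval_leaf fval_two_children)

theorem lemma4:
  fixes i :: nat
  assumes "i \<ge> 1"
  shows "fval (Rtree i) = i - 1"
  using assms
proof (induction i rule: Rtree.induct)
  case (3 n)
  have "fval (Rtree (Suc (Suc n))) = max (n + fval (Htree (Suc n))) (Suc n)"
    using 3 by (simp del: fval.simps add: fval_two_children ht_Rtree ht_Htree)
  then show ?case
    using fval_Htree_le_1[of "Suc n"] by simp
qed auto

end
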